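(* Let $n\geq 2$ and let $\mathbb{H}^{n}\times\mathbb{R}=\{(x,t)\in\mathbb{R}^{n}\times\mathbb{R}: x=(x_1,\dots,x_n),\ x_n>0\}$ be endowed with the metric $g=\frac{1}{x_{n}^{2}}\sum_{i=1}^{n}dx_{i}^{2}+dt^{2}$. Let $0<m<\infty$ and $\lambda$ be constants and $f$ a smooth function on $\mathbb{H}^{n}\times\mathbb{R}$ with $Ric+\nabla^{2}f-\frac{1}{m}df\otimes df=\lambda g$. Then (for each fixed $x$) either $\frac{\partial f}{\partial t}(x,t)=\pm\sqrt{-m\lambda}$ for all $t$, or $\frac{\partial f}{\partial t}(x,t)=-\sqrt{-m\lambda}\tanh(\mu t+a)$ for all $t$, where $a=a(x)$ and $\mu=\sqrt{-\frac{\lambda}{m}}$.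
   Context: $Ric$ denotes the Ricci tensor of $g$ and $\nabla^2 f$ the Hessian of $f$ with respect to $g$. *)

theory Defs
  imports "HOL-Analysis.Analysis"
begin

definition pd :: "'i::finite \<Rightarrow> (real^'i \<Rightarrow> real) \<Rightarrow> real^'i \<Rightarrow> real" where
  "pd i F p = deriv (\<lambda>s. F (p + s *\<^sub>R axis i 1)) 0"

fun ipd :: "'i::finite list \<Rightarrow> (real^'i \<Rightarrow> real) \<Rightarrow> real^'i \<Rightarrow> real" where
  "ipd [] F = F"
| "ipd (i # is) F = pd i (ipd is F)"

definition smooth_on :: "(real^'i::finite) set \<Rightarrow> (real^'i \<Rightarrow> real) \<Rightarrow> bool" where
  "smooth_on U F \<longleftrightarrow>
     (\<forall>is. continuous_on U (ipd is F) \<and>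
        (\<forall>i. \<forall>p\<in>U. (\<lambda>s. ipd is F (p + s *\<^sub>R axis i 1)) differentiable (at 0)))"

definition christoffel :: "(real^'i::finite \<Rightarrow> real^'i^'i) \<Rightarrow> 'i \<Rightarrow> 'i \<Rightarrow> 'i \<Rightarrow> real^'i \<Rightarrow> real" where
  "christoffel G k i j p =
     (1/2) * (\<Sum>l\<in>UNIV. matrix_inv (G p) $ k $ l *
        (pd i (\<lambda>q. G q $ j $ l) p + pd j (\<lambda>q. G q $ i $ l) p - pd l (\<lambda>q. G q $ i $ j) p))"

definition ricci :: "(real^'i::finite \<Rightarrow> real^'i^'i) \<Rightarrow> 'i \<Rightarrow> 'i \<Rightarrow> real^'i \<Rightarrow> real" where
  "ricci G i j p =
     (\<Sum>k\<in>UNIV. pd k (christoffel G k i j) p - pd j (christoffel G k k i) p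
        + (\<Sum>l\<in>UNIV. christoffel G k k l p * christoffel G l i j p
                     - christoffel G k j l p * christoffel G l k i p))"

definition hessian :: "(real^'i::finite \<Rightarrow> real^'i^'i) \<Rightarrow> (real^'i \<Rightarrow> real) \<Rightarrow> 'i \<Rightarrow> 'i \<Rightarrow> real^'i \<Rightarrow> real" where
  "hessian G f i j p = pd i (pd j f) p - (\<Sum>k\<in>UNIV. christoffel G k i j p * pd k f p)"

text \<open>The metric g = x_n^{-2} \<Sum> dx_i^2 + dt^2 on H^n x R, where the coordinate index
  type 'i has n+1 elements, tt is the t-coordinate and xn the coordinate x_n.\<close>
definition hypR_metric :: "'i::finite \<Rightarrow> 'i \<Rightarrow> real^'i \<Rightarrow> real^'i^'i" where
  "hypR_metric tt xn p = (\<chi> i j. if i = j then (if i = tt then 1 else 1 / (p $ xn)^2) else 0)"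

definition hypR_domain :: "'i::finite \<Rightarrow> (real^'i) set" where
  "hypR_domain xn = {p. p $ xn > 0}"

end

theory Submission
  imports Defs
begin

text \<open>The metric is the product of a metric on the x-factor with dt^2, and its coefficients do
  not depend on t. Hence every Christoffel symbol with an index t vanishes, Ric(d/dt, d/dt) = 0,
  and the tt-component of the equation becomes the Riccati equation u' = \<lambda> + u^2/m for the
  derivative u(t) of f in t. It remains to classify the solutions defined on all of \<real>: for
  \<lambda> > 0 the angle arctan (u/sqrt(m\<lambda>)) would grow linearly, which is impossible. For \<lambda> \<le> 0 put
  c = sqrt(-m\<lambda>); a solution that meets an equilibrium \<plusminus>c stays there by uniqueness for linear
  ODEs, for c = 0 any other solution has 1/u linear and so blows up, and for c > 0 the cross
  ratio (u - c)/(u + c) is a negative multiple of exp (2ct/m), which is the tanh solution.\<close>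

definition splits_off_line :: "(real^'i::finite \<Rightarrow> real^'i^'i) \<Rightarrow> 'i \<Rightarrow> bool" where
  "splits_off_line G tt \<longleftrightarrow>
     (\<forall>q l. G q $ tt $ l = (if l = tt then 1 else 0) \<and> G q $ l $ tt = (if l = tt then 1 else 0))
     \<and> (\<forall>q s. G (q + s *\<^sub>R axis tt 1) = G q)"

lemma hypR_metric_splits_off_line:
  assumes "tt \<noteq> xn"
  shows "splits_off_line (hypR_metric tt xn) tt"
proof -
  have xn: "(q + s *\<^sub>R axis tt 1) $ xn = q $ xn" for q :: "real^'a" and s
    using assms by (simp add: axis_def)
  show ?thesis
    unfolding splits_off_line_def hypR_metric_def xn by simp
qed

lemma pd_const: "(\<And>q. F q = k) \<Longrightarrow> pd i F p = 0"
  unfolding pd_def by simp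

context
  fixes G :: "real^'i::finite \<Rightarrow> real^'i^'i" and tt :: 'i
  assumes split: "splits_off_line G tt"
begin

lemma pd_line_metric_coeff: "pd tt (\<lambda>q. G q $ i $ j) p = 0"
  using split unfolding pd_def splits_off_line_def by simp

lemma christoffel_line_left: "christoffel G k tt j q = 0"
  using split unfolding christoffel_def splits_off_line_def
  by (simp add: pd_line_metric_coeff pd_const[of _ "if _ = tt then 1 else 0"])

lemma christoffel_line_right: "christoffel G k i tt q = 0"
  using split unfolding christoffel_def splits_off_line_def
  by (simp add: pd_line_metric_coeff pd_const[of _ "if _ = tt then 1 else 0"])

lemma ricci_line_line: "ricci G tt tt p = 0"
proof -
  have "christoffel G k tt tt = (\<lambda>q. 0)" "christoffel G k k tt = (\<lambda>q. 0)" for k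
    by (simp_all add: fun_eq_iff christoffel_line_left christoffel_line_right)
  then show ?thesis
    unfolding ricci_def by (simp add: pd_const christoffel_line_left christoffel_line_right)
qed

lemma hessian_line_line: "hessian G f tt tt p = pd tt (pd tt f) p"
  by (simp add: hessian_def christoffel_line_left)

end

lemma smooth_on_pd_has_derivative_along_axis:
  assumes "smooth_on U F" and "p + s *\<^sub>R axis i 1 \<in> U"
  shows "((\<lambda>s. pd i F (p + s *\<^sub>R axis i 1)) has_real_derivative
            pd i (pd i F) (p + s *\<^sub>R axis i 1)) (at s)"
proof -
  define g where "g = (\<lambda>s. pd i F (p + s *\<^sub>R axis i 1))"
  have shift: "p + s *\<^sub>R axis i 1 + r *\<^sub>R axis i 1 = p + (r + s) *\<^sub>R axis i 1" for r
    by (simp add: algebra_simps)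
  have "(\<lambda>r. ipd [i] F (p + s *\<^sub>R axis i 1 + r *\<^sub>R axis i 1)) differentiable (at 0)"
    using assms unfolding smooth_on_def by blast
  then obtain D where D: "((\<lambda>r. g (r + s)) has_real_derivative D) (at 0)"
    by (auto simp: shift g_def real_differentiable_def)
  have "pd i (pd i F) (p + s *\<^sub>R axis i 1) = deriv (\<lambda>r. g (r + s)) 0"
    unfolding pd_def[of i "pd i F"] by (simp add: shift g_def)
  also have "\<dots> = D"
    using D by (rule DERIV_imp_deriv)
  finally show ?thesis
    using D DERIV_shift[of g D 0 s] unfolding g_def by simp
qed

lemma linear_ode_zero_forward:
  fixes y a :: "real \<Rightarrow> real"
  assumes "lo \<le> hi"
    and d: "\<And>s. s \<in> {lo..hi} \<Longrightarrow> (y has_real_derivative a s * y s) (at s)"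
    and K: "\<And>s. s \<in> {lo..hi} \<Longrightarrow> \<bar>a s\<bar> \<le> K"
    and "y lo = 0"
  shows "y hi = 0"
proof -
  define h where "h s = (y s)\<^sup>2 * exp (- (2 * K * s))" for s
  have "h hi \<le> h lo"
  proof (rule DERIV_nonpos_imp_nonincreasing[OF \<open>lo \<le> hi\<close>])
    fix s assume s: "lo \<le> s" "s \<le> hi"
    have "(h has_real_derivative 2 * (a s - K) * (y s)\<^sup>2 * exp (- (2 * K * s))) (at s)"
      unfolding h_def using s
      by (auto intro!: derivative_eq_intros d simp: algebra_simps power2_eq_square)
    moreover have "a s - K \<le> 0" using K[of s] s by auto
    then have "2 * (a s - K) * (y s)\<^sup>2 * exp (- (2 * K * s)) \<le> 0"
      by (simp add: mult_nonpos_nonneg)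
    ultimately show "\<exists>d. (h has_real_derivative d) (at s) \<and> d \<le> 0" by blast
  qed
  then have "(y hi)\<^sup>2 * exp (- (2 * K * hi)) \<le> 0"
    using \<open>y lo = 0\<close> by (simp add: h_def)
  then show ?thesis
    by (simp add: mult_le_0_iff)
qed

lemma linear_ode_zero_unique:
  fixes y a :: "real \<Rightarrow> real"
  assumes d: "\<And>s. (y has_real_derivative a s * y s) (at s)"
    and a: "continuous_on UNIV a" and "y s0 = 0"
  shows "y s1 = 0"
proof -
  define I where "I = {min s0 s1..max s0 s1}"
  have "compact (a ` I)"
    unfolding I_def by (rule compact_continuous_image) (auto intro: continuous_on_subset[OF a])
  then obtain K where K: "\<And>s. s \<in> I \<Longrightarrow> \<bar>a s\<bar> \<le> K"
    using compact_imp_bounded bounded_iff by (metis image_eqI real_norm_def)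
  show ?thesis
  proof (cases "s0 \<le> s1")
    case True
    then show ?thesis
      using linear_ode_zero_forward[OF True d, of K] K \<open>y s0 = 0\<close> by (simp add: I_def)
  next
    case False
    have "y (- (- s1)) = 0"
    proof (rule linear_ode_zero_forward[where y = "\<lambda>r. y (- r)" and a = "\<lambda>r. - a (- r)"
          and lo = "- s0" and hi = "- s1" and K = K])
      show "((\<lambda>s. y (- s)) has_real_derivative - a (- s) * y (- s)) (at s)" if "s \<in> {- s0..- s1}" for s
        using d[of "- s"] DERIV_mirror[where f = y and x = s] by simp
      show "\<bar>- a (- s)\<bar> \<le> K" if "s \<in> {- s0..- s1}" for s
        using K[of "- s"] that False by (auto simp: I_def)
    qed (use False \<open>y s0 = 0\<close> in auto)
    then show ?thesis by simp
  qed
qed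

lemma riccati_equilibrium_unique:
  fixes u :: "real \<Rightarrow> real"
  assumes d: "\<And>s. (u has_real_derivative ((u s)\<^sup>2 - c\<^sup>2) / m) (at s)"
    and "m \<noteq> 0" and e: "e\<^sup>2 = c\<^sup>2" and "u s0 = e"
  shows "u s = e"
proof -
  have "continuous_on UNIV u"
    using d by (meson DERIV_isCont continuous_at_imp_continuous_on)
  then have cont: "continuous_on UNIV (\<lambda>s. u s / m)"
    using continuous_on_mult_right[of UNIV u "inverse m"] by (simp add: divide_inverse)
  have "(u s - e) * exp (- (e / m * s)) = 0"
  proof (rule linear_ode_zero_unique[where y = "\<lambda>s. (u s - e) * exp (- (e / m * s))", OF _ cont])
    fix s
    have ce: "c * c = e * e" using e by (simp add: power2_eq_square)
    show "((\<lambda>s. (u s - e) * exp (- (e / m * s))) has_real_derivative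
        u s / m * ((u s - e) * exp (- (e / m * s)))) (at s)"
      using ce \<open>m \<noteq> 0\<close>
      by (auto intro!: derivative_eq_intros d simp: field_simps power2_eq_square)
  qed (use \<open>u s0 = e\<close> in simp)
  then show ?thesis by simp
qed

lemma riccati_degenerate_blowup:
  fixes u :: "real \<Rightarrow> real"
  assumes d: "\<And>s. (u has_real_derivative (u s)\<^sup>2 / m) (at s)"
    and "m \<noteq> 0" and nz: "\<And>s. u s \<noteq> 0"
  shows False
proof -
  define R where "R s = inverse (u s) + s / m" for s
  have "(R has_real_derivative 0) (at s)" for s
    unfolding R_def using nz[of s] \<open>m \<noteq> 0\<close>
    by (auto intro!: derivative_eq_intros d simp: field_simps power2_eq_square)
  then have "R (m / u 0) = R 0"
    using DERIV_isconst_all by blast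
  then have "inverse (u (m / u 0)) = 0"
    using \<open>m \<noteq> 0\<close> nz[of 0] by (simp add: R_def inverse_eq_divide)
  then show False using nz by simp
qed

lemma riccati_cross_ratio:
  fixes u :: "real \<Rightarrow> real"
  assumes d: "\<And>s. (u has_real_derivative ((u s)\<^sup>2 - c\<^sup>2) / m) (at s)"
    and "m \<noteq> 0" and nz: "\<And>s. u s + c \<noteq> 0"
  shows "(u s - c) / (u s + c) = (u 0 - c) / (u 0 + c) * exp (2 * c / m * s)"
proof -
  define Q where "Q s = (u s - c) / (u s + c) * exp (- (2 * c / m * s))" for s
  have "(Q has_real_derivative 0) (at s)" for s
    unfolding Q_def using nz[of s] \<open>m \<noteq> 0\<close>
    by (auto intro!: derivative_eq_intros d simp: field_simps power2_eq_square)
  then have "Q s = Q 0"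
    using DERIV_isconst_all by blast
  moreover have "Q 0 = (u 0 - c) / (u 0 + c)"
    by (simp add: Q_def)
  moreover have "(u s - c) / (u s + c) = Q s * exp (2 * c / m * s)"
    unfolding Q_def by (simp add: mult.assoc flip: exp_add)
  ultimately show ?thesis
    by simp
qed

lemma riccati_cross_ratio_neg:
  fixes u :: "real \<Rightarrow> real"
  assumes d: "\<And>s. (u has_real_derivative ((u s)\<^sup>2 - c\<^sup>2) / m) (at s)"
    and "m \<noteq> 0" and "c \<noteq> 0" and above: "\<And>s. u s \<noteq> c" and below: "\<And>s. u s \<noteq> - c"
  shows "(u 0 - c) / (u 0 + c) < 0"
proof -
  define q where "q = (u 0 - c) / (u 0 + c)"
  have nz: "u s + c \<noteq> 0" for s
    using below[of s] by (auto simp: add_eq_0_iff)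
  have "q \<noteq> 0"
    using above[of 0] nz[of 0] by (simp add: q_def)
  moreover have "\<not> q > 0"
  proof
    assume "q > 0"
    define s1 where "s1 = - ln q / (2 * c / m)"
    have "q * exp (2 * c / m * s1) = 1"
      using \<open>q > 0\<close> \<open>m \<noteq> 0\<close> \<open>c \<noteq> 0\<close> by (simp add: s1_def exp_minus)
    moreover have "(u s1 - c) / (u s1 + c) = q * exp (2 * c / m * s1)"
      unfolding q_def by (rule riccati_cross_ratio[OF d \<open>m \<noteq> 0\<close> nz])
    ultimately have "u s1 - c = u s1 + c"
      using nz[of s1] by simp
    then show False using \<open>c \<noteq> 0\<close> by simp
  qed
  ultimately show ?thesis
    unfolding q_def by linarith
qed

lemma tanh_real_exp_double: "tanh (y::real) = (exp (2 * y) - 1) / (exp (2 * y) + 1)"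
  using tanh_ln_real[of "exp y"] by (simp add: power2_eq_square flip: exp_add)

lemma riccati_tanh_solution:
  fixes u :: "real \<Rightarrow> real"
  assumes d: "\<And>s. (u has_real_derivative ((u s)\<^sup>2 - c\<^sup>2) / m) (at s)"
    and "m \<noteq> 0" and "c \<noteq> 0" and above: "\<And>s. u s \<noteq> c" and below: "\<And>s. u s \<noteq> - c"
  shows "\<exists>a. \<forall>s. u s = - c * tanh (c / m * s + a)"
proof -
  have nz: "u s + c \<noteq> 0" for s
    using below[of s] by (auto simp: add_eq_0_iff)
  define q where "q = (u 0 - c) / (u 0 + c)"
  have cr: "(u s - c) / (u s + c) = q * exp (2 * c / m * s)" for s
    unfolding q_def by (rule riccati_cross_ratio[OF d \<open>m \<noteq> 0\<close> nz])
  have "q < 0"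
    unfolding q_def by (rule riccati_cross_ratio_neg[OF d \<open>m \<noteq> 0\<close> \<open>c \<noteq> 0\<close> above below])
  define a where "a = ln (- q) / 2"
  have "u s = - c * tanh (c / m * s + a)" for s
  proof -
    define E where "E = exp (2 * (c / m * s + a))"
    define T where "T = tanh (c / m * s + a)"
    have "E > 0" by (simp add: E_def)
    have "E = - q * exp (2 * c / m * s)"
      using \<open>q < 0\<close> by (simp add: E_def a_def distrib_left exp_add)
    then have cross: "u s - c = - E * (u s + c)"
      using cr[of s] nz[of s] by (simp add: divide_eq_eq)
    have tanh: "T * (E + 1) = E - 1"
      using \<open>E > 0\<close> tanh_real_exp_double[of "c / m * s + a", folded E_def T_def]
      by (simp add: add_pos_pos)
    have "(u s + c * T) * (E + 1) = u s * (E + 1) + c * (T * (E + 1))"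
      by (simp add: algebra_simps)
    also have "\<dots> = (u s - c) + E * (u s + c)"
      unfolding tanh by (simp add: algebra_simps)
    also have "\<dots> = 0"
      using cross by simp
    finally show ?thesis
      using \<open>E > 0\<close> by (simp add: T_def add_eq_0_iff)
  qed
  then show ?thesis by blast
qed

lemma riccati_positive_no_global_solution:
  fixes u :: "real \<Rightarrow> real"
  assumes d: "\<And>s. (u has_real_derivative ((u s)\<^sup>2 + k\<^sup>2) / m) (at s)"
    and "m \<noteq> 0" and "k \<noteq> 0"
  shows False
proof -
  define v where "v s = arctan (u s / k) - k / m * s" for s
  have "(v has_real_derivative 0) (at s)" for s
  proof -
    have "(v has_real_derivative
        inverse (1 + (u s / k)\<^sup>2) * (((u s)\<^sup>2 + k\<^sup>2) / m / k) - k / m) (at s)"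
      unfolding v_def
      by (rule DERIV_diff[OF DERIV_chain2[OF DERIV_arctan DERIV_cdivide[OF d]] DERIV_cmult_Id])
    moreover have "inverse (1 + (u s / k)\<^sup>2) * (((u s)\<^sup>2 + k\<^sup>2) / m / k) = k / m"
    proof -
      have sum_sq: "1 + (u s / k)\<^sup>2 = ((u s)\<^sup>2 + k\<^sup>2) / k\<^sup>2"
        using \<open>k \<noteq> 0\<close> by (simp add: field_simps)
      have cancel: "inverse (P / k\<^sup>2) * (P / m / k) = k / m" if "P > 0" for P
        using that \<open>m \<noteq> 0\<close> \<open>k \<noteq> 0\<close> by (simp add: field_simps power2_eq_square)
      have "(u s)\<^sup>2 + k\<^sup>2 > 0"
        using \<open>k \<noteq> 0\<close> by (simp add: add_nonneg_pos)
      then show ?thesis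
        unfolding sum_sq by (rule cancel)
    qed
    ultimately show ?thesis
      by simp
  qed
  then have "v (2 * pi * m / k) = v 0"
    using DERIV_isconst_all by blast
  then have "arctan (u (2 * pi * m / k) / k) = arctan (u 0 / k) + 2 * pi"
    using \<open>m \<noteq> 0\<close> \<open>k \<noteq> 0\<close> by (simp add: v_def)
  moreover have "arctan (u (2 * pi * m / k) / k) < pi / 2" "- (pi / 2) < arctan (u 0 / k)"
    by (rule arctan_ubound arctan_lbound)+
  ultimately show False
    using pi_gt_zero by linarith
qed

lemma riccati_nonpos_global_solutions:
  fixes u :: "real \<Rightarrow> real"
  assumes "m \<noteq> 0" and d: "\<And>s. (u has_real_derivative ((u s)\<^sup>2 - c\<^sup>2) / m) (at s)"
  shows "(\<forall>s. u s = c) \<or> (\<forall>s. u s = - c) \<or> (\<exists>a. \<forall>s. u s = - c * tanh (c / m * s + a))"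
proof (cases "\<exists>s0. u s0 = c \<or> u s0 = - c")
  case True
  then obtain s0 e where "u s0 = e" "e = c \<or> e = - c" by blast
  then have "\<forall>s. u s = e"
    using riccati_equilibrium_unique[OF d \<open>m \<noteq> 0\<close>] by (metis power2_minus)
  then show ?thesis using \<open>e = c \<or> e = - c\<close> by blast
next
  case False
  then have above: "\<And>s. u s \<noteq> c" and below: "\<And>s. u s \<noteq> - c" by auto
  have "c \<noteq> 0"
  proof
    assume "c = 0"
    then show False
      using riccati_degenerate_blowup[of u m] d \<open>m \<noteq> 0\<close> above by simp
  qed
  then show ?thesis
    using riccati_tanh_solution[OF d \<open>m \<noteq> 0\<close> _ above below] by blast
qed

lemma riccati_global_solutions:
  fixes u :: "real \<Rightarrow> real"
  assumes m: "0 < m"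
    and d: "\<And>s. (u has_real_derivative lam + (u s)\<^sup>2 / m) (at s)"
  shows "(\<forall>s. u s = sqrt (- m * lam))
       \<or> (\<forall>s. u s = - sqrt (- m * lam))
       \<or> (\<exists>a. \<forall>s. u s = - sqrt (- m * lam) * tanh (sqrt (- lam / m) * s + a))"
proof -
  have "m \<noteq> 0" using m by simp
  have "lam \<le> 0"
  proof (rule ccontr)
    assume "\<not> lam \<le> 0"
    define k where "k = sqrt (m * lam)"
    have "k\<^sup>2 = m * lam" "k \<noteq> 0"
      using m \<open>\<not> lam \<le> 0\<close> by (auto simp: k_def)
    then have "lam + (u s)\<^sup>2 / m = ((u s)\<^sup>2 + k\<^sup>2) / m" for s
      using m by (simp add: field_simps)
    then show False
      using riccati_positive_no_global_solution[OF _ \<open>m \<noteq> 0\<close> \<open>k \<noteq> 0\<close>] d by metis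
  qed
  define c where "c = sqrt (- m * lam)"
  have "c\<^sup>2 = - m * lam"
    using m \<open>lam \<le> 0\<close> by (simp add: c_def mult_nonneg_nonpos)
  then have "lam + (u s)\<^sup>2 / m = ((u s)\<^sup>2 - c\<^sup>2) / m" for s
    using m by (simp add: field_simps)
  then have d': "(u has_real_derivative ((u s)\<^sup>2 - c\<^sup>2) / m) (at s)" for s
    using d by metis
  have "sqrt (- lam / m) = sqrt (- m * lam / m\<^sup>2)"
    using m by (simp add: power2_eq_square)
  also have "\<dots> = c / m"
    unfolding real_sqrt_divide c_def using m by simp
  finally have mu: "sqrt (- lam / m) = c / m" .
  have "(\<forall>s. u s = c) \<or> (\<forall>s. u s = - c) \<or> (\<exists>a. \<forall>s. u s = - c * tanh (c / m * s + a))"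
    using \<open>m \<noteq> 0\<close> d' by (rule riccati_nonpos_global_solutions)
  then show ?thesis
    unfolding mu c_def .
qed

theorem lemma3:
  fixes tt xn :: "'i::finite" and m lam :: real and f :: "real^'i \<Rightarrow> real"
  assumes dim: "CARD('i) \<ge> 3"
    and idx: "tt \<noteq> xn"
    and m: "0 < m"
    and smooth: "smooth_on (hypR_domain xn) f"
    and eq: "\<And>p i j. p \<in> hypR_domain xn \<Longrightarrow>
        ricci (hypR_metric tt xn) i j p + hessian (hypR_metric tt xn) f i j p
          - (1/m) * pd i f p * pd j f p = lam * hypR_metric tt xn p $ i $ j"
    and x: "x \<in> hypR_domain xn"
  shows "(\<forall>s. pd tt f (\<chi> k. if k = tt then s else x $ k) = sqrt (- m * lam))
       \<or> (\<forall>s. pd tt f (\<chi> k. if k = tt then s else x $ k) = - sqrt (- m * lam))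
       \<or> (\<exists>a. \<forall>s. pd tt f (\<chi> k. if k = tt then s else x $ k)
                 = - sqrt (- m * lam) * tanh (sqrt (- lam / m) * s + a))"
proof -
  define x0 :: "real^'i" where "x0 = (\<chi> k. if k = tt then 0 else x $ k)"
  have line: "(\<chi> k. if k = tt then s else x $ k) = x0 + s *\<^sub>R axis tt 1" for s
    by (simp add: x0_def vec_eq_iff axis_def)
  have on_domain: "x0 + s *\<^sub>R axis tt 1 \<in> hypR_domain xn" for s
    using x idx by (simp add: x0_def hypR_domain_def axis_def)
  have split: "splits_off_line (hypR_metric tt xn) tt"
    using idx by (rule hypR_metric_splits_off_line)
  have "((\<lambda>s. pd tt f (x0 + s *\<^sub>R axis tt 1)) has_real_derivative
          lam + (pd tt f (x0 + s *\<^sub>R axis tt 1))\<^sup>2 / m) (at s)" for s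
  proof -
    have "pd tt (pd tt f) (x0 + s *\<^sub>R axis tt 1) - (1/m) * (pd tt f (x0 + s *\<^sub>R axis tt 1))\<^sup>2 = lam"
      using eq[OF on_domain, of tt tt] split
      by (simp add: ricci_line_line hessian_line_line hypR_metric_def power2_eq_square)
    then have "pd tt (pd tt f) (x0 + s *\<^sub>R axis tt 1) = lam + (pd tt f (x0 + s *\<^sub>R axis tt 1))\<^sup>2 / m"
      by simp
    then show ?thesis
      using smooth_on_pd_has_derivative_along_axis[OF smooth on_domain[of s]] by metis
  qed
  from riccati_global_solutions[OF m this]
  show ?thesis
    unfolding line .
qed

end
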